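(* Let $r\ge2$ and fix $\tilde{\mathbf z}=(z_2,\dots,z_r)^\intercal\in\Omega^{r-1}$. For any $2\le j\le r$, any non-negative integer $k$ and any $t\in\mathbb C_\infty$ with $|t|_\infty\le1$, \[\lim_{|z_1|_\infty=|\mathbf z|_i\to\infty}\sum'_{a_1,\dots,a_r\in A}\frac{a_j(t)}{(a_1z_1+\dots+a_rz_r)^{q^k}}=\sum'_{a_2,\dots,a_r\in A}\frac{a_j(t)}{(a_2z_2+\dots+a_rz_r)^{q^k}}.\]
   Context: Let $q$ be a prime power, $A=\mathbb F_q[\theta]$, $|\theta|_\infty=q$, $K_\infty=\mathbb F_q((1/\theta))$, $\mathbb C_\infty$ the completion of an algebraic closure of $K_\infty$; $a(t)$ is $a\in A$ with $\theta$ replaced by $t$. For $n\ge1$, $\Omega^n$ is the set of $(z_1,\dots,z_n)^\intercal\in\mathbb C_\infty^n$ with $K_\infty$-linearly independent entries and $z_n=1$. Here $\mathbf z=(z_1,\tilde{\mathbf z})=(z_1,z_2,\dots,z_r)^\intercal\in\Omega^r$, $|\mathbf z|_i=\inf\{|z_1-\alpha|_\infty:\alpha\in K_\infty z_2+\dots+K_\infty z_r\}$, and the limit is taken as $z_1$ varies (with $\tilde{\mathbf z}$ fixed, $\mathbf z\in\Omega^r$) subject to $|z_1|_\infty=|\mathbf z|_i$ and $|z_1|_\infty\to\infty$. $\sum'$ excludes the tuple with all entries zero. *)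

theory Defs
  imports "HOL-Computational_Algebra.Computational_Algebra"
begin

text \<open>We work in an arbitrary field 'c equipped with a function absv, and impose
  conditions that characterise (C_infinity, |.|_infinity) up to isomorphism:
  a complete, algebraically closed, non-archimedean valued field of characteristic p
  containing theta with absv theta = q, in which the elements algebraic over
  K_infinity (the closure of F_q(theta)) are dense.\<close>

definition Fq :: "nat \<Rightarrow> 'c::field set" where
  "Fq q = {x. x ^ q = x}"

text \<open>A = F_q[theta], represented by polynomials with coefficients in F_q;
  a(theta) is poly a theta and a(t) is poly a t.\<close>
definition Apoly :: "nat \<Rightarrow> 'c::field poly set" where
  "Apoly q = {a. \<forall>i. coeff a i \<in> Fq q}"

definition Fq_theta :: "nat \<Rightarrow> 'c::field \<Rightarrow> 'c set" where
  "Fq_theta q \<theta> = {poly a \<theta> / poly b \<theta> | a b. a \<in> Apoly q \<and> b \<in> Apoly q \<and> b \<noteq> 0}"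

definition Kinf :: "('c::field \<Rightarrow> real) \<Rightarrow> nat \<Rightarrow> 'c \<Rightarrow> 'c set" where
  "Kinf absv q \<theta> = {x. \<forall>\<epsilon>>0. \<exists>y\<in>Fq_theta q \<theta>. absv (x - y) < \<epsilon>}"

definition algebraic_over :: "'c::field set \<Rightarrow> 'c \<Rightarrow> bool" where
  "algebraic_over K x \<longleftrightarrow> (\<exists>P. P \<noteq> 0 \<and> (\<forall>i. coeff P i \<in> K) \<and> poly P x = 0)"

definition Cinf_setup :: "nat \<Rightarrow> 'c::field \<Rightarrow> ('c \<Rightarrow> real) \<Rightarrow> bool" where
  "Cinf_setup q \<theta> absv \<longleftrightarrow>
     (\<exists>p n. prime p \<and> n > 0 \<and> q = p ^ n \<and> of_nat p = (0::'c)) \<and>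
     (\<forall>x. absv x \<ge> 0) \<and> (\<forall>x. absv x = 0 \<longleftrightarrow> x = 0) \<and>
     (\<forall>x y. absv (x * y) = absv x * absv y) \<and>
     (\<forall>x y. absv (x + y) \<le> max (absv x) (absv y)) \<and>
     absv \<theta> = real q \<and>
     (\<forall>X::nat \<Rightarrow> 'c. (\<forall>\<epsilon>>0. \<exists>N. \<forall>m\<ge>N. \<forall>n\<ge>N. absv (X m - X n) < \<epsilon>)
          \<longrightarrow> (\<exists>L. \<forall>\<epsilon>>0. \<exists>N. \<forall>n\<ge>N. absv (X n - L) < \<epsilon>)) \<and>
     (\<forall>P::'c poly. degree P > 0 \<longrightarrow> (\<exists>x. poly P x = 0)) \<and>
     (\<forall>x. \<forall>\<epsilon>>0. \<exists>y. algebraic_over (Kinf absv q \<theta>) y \<and> absv (x - y) < \<epsilon>)"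

definition lin_indep_over :: "'c::field set \<Rightarrow> nat set \<Rightarrow> (nat \<Rightarrow> 'c) \<Rightarrow> bool" where
  "lin_indep_over K I v \<longleftrightarrow>
     (\<forall>c. (\<forall>i\<in>I. c i \<in> K) \<longrightarrow> (\<Sum>i\<in>I. c i * v i) = 0 \<longrightarrow> (\<forall>i\<in>I. c i = 0))"

definition imag_abs :: "('c::field \<Rightarrow> real) \<Rightarrow> 'c set \<Rightarrow> nat \<Rightarrow> 'c \<Rightarrow> (nat \<Rightarrow> 'c) \<Rightarrow> real" where
  "imag_abs absv K r z1 zt =
     Inf {absv (z1 - (\<Sum>i\<in>{2..r}. c i * zt i)) | c. \<forall>i\<in>{2..r}. c i \<in> K}"

definition abs_has_sum :: "('c::field \<Rightarrow> real) \<Rightarrow> ('b \<Rightarrow> 'c) \<Rightarrow> 'b set \<Rightarrow> 'c \<Rightarrow> bool" where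
  "abs_has_sum absv f S s \<longleftrightarrow>
     (\<forall>\<epsilon>>0. \<exists>F0. finite F0 \<and> F0 \<subseteq> S \<and>
        (\<forall>F. finite F \<and> F0 \<subseteq> F \<and> F \<subseteq> S \<longrightarrow> absv (sum f F - s) < \<epsilon>))"

definition abs_infsum :: "('c::field \<Rightarrow> real) \<Rightarrow> ('b \<Rightarrow> 'c) \<Rightarrow> 'b set \<Rightarrow> 'c" where
  "abs_infsum absv f S = (THE s. abs_has_sum absv f S s)"

definition tuples :: "nat \<Rightarrow> nat set \<Rightarrow> (nat \<Rightarrow> 'c::field poly) set" where
  "tuples q I = {a. (\<forall>i\<in>I. a i \<in> Apoly q) \<and> (\<forall>i. i \<notin> I \<longrightarrow> a i = 0) \<and> (\<exists>i\<in>I. a i \<noteq> 0)}"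

end

(* Linear independence of the entries of z over the complete field K_inf yields a constant
   C > 0 with C |a_i(theta)| <= |a_1 z_1 + ... + a_r z_r| for all i (induction on the number
   of entries; completeness of K_inf makes the distance from one entry to the span of the
   others positive).  Hence a ball contains only finitely many lattice points, the terms of
   both series tend to 0, and for an ultrametric absolute value this already gives
   unconditional convergence.  The r-fold sum splits into the terms with a_1 = 0, which form
   the (r-1)-fold sum, and those with a_1 <> 0.  For the latter
   a_1 z_1 + ... + a_r z_r = a_1(theta) (z_1 - alpha) with alpha in K_inf z_2 + ... + K_inf z_r,
   so its absolute value is at least |z|_i = |z_1|; by the ultrametric inequality these terms
   contribute at most |z_1|^(-q^k), which tends to 0. *)

theory Submission
  imports Defs
begin

section \<open>Subfields and linear independence\<close>

definition is_subfield :: "'a::field set \<Rightarrow> bool" where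
  "is_subfield K \<longleftrightarrow> 0 \<in> K \<and> 1 \<in> K \<and> (\<forall>x\<in>K. \<forall>y\<in>K. x - y \<in> K \<and> x * y \<in> K)
     \<and> (\<forall>x\<in>K. inverse x \<in> K)"

lemma is_subfieldD:
  assumes "is_subfield K"
  shows subfield_0: "0 \<in> K" and subfield_1: "1 \<in> K"
    and subfield_diff: "x \<in> K \<Longrightarrow> y \<in> K \<Longrightarrow> x - y \<in> K"
    and subfield_mult: "x \<in> K \<Longrightarrow> y \<in> K \<Longrightarrow> x * y \<in> K"
    and subfield_inverse: "x \<in> K \<Longrightarrow> inverse x \<in> K"
  using assms by (auto simp: is_subfield_def)

lemma subfield_minus: "is_subfield K \<Longrightarrow> x \<in> K \<Longrightarrow> - x \<in> K"
  using subfield_diff[of K 0 x] subfield_0[of K] by simp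

lemma subfield_divide: "is_subfield K \<Longrightarrow> x \<in> K \<Longrightarrow> y \<in> K \<Longrightarrow> x / y \<in> K"
  by (simp add: divide_inverse subfield_mult subfield_inverse)

lemma lin_indep_overD:
  "lin_indep_over K I v \<Longrightarrow> \<forall>i\<in>I. c i \<in> K \<Longrightarrow> (\<Sum>i\<in>I. c i * v i) = 0 \<Longrightarrow> i \<in> I \<Longrightarrow> c i = 0"
  by (simp add: lin_indep_over_def)

lemma lin_indep_over_subset:
  assumes "lin_indep_over K I z" "J \<subseteq> I" "finite I" "0 \<in> K"
  shows "lin_indep_over K J z"
  unfolding lin_indep_over_def
proof (intro allI impI)
  fix c
  assume c: "\<forall>i\<in>J. c i \<in> K" and "(\<Sum>i\<in>J. c i * z i) = 0"
  define c' where "c' i = (if i \<in> J then c i else 0)" for i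
  have "(\<Sum>i\<in>I. c' i * z i) = (\<Sum>i\<in>J. c' i * z i)"
    using assms(2,3) by (intro sum.mono_neutral_right) (auto simp: c'_def)
  also have "\<dots> = (\<Sum>i\<in>J. c i * z i)"
    by (simp add: c'_def)
  moreover have "\<forall>i\<in>I. c' i \<in> K"
    using c assms(4) by (simp add: c'_def)
  ultimately have "c' i = 0" if "i \<in> I" for i
    using lin_indep_overD[OF assms(1)] \<open>(\<Sum>i\<in>J. c i * z i) = 0\<close> that by simp
  then show "\<forall>i\<in>J. c i = 0"
    using assms(2) by (force simp: c'_def)
qed

lemma lin_indep_over_insert_not_in_span:
  assumes "lin_indep_over K (insert i0 J) z" "finite J" "i0 \<notin> J" "1 \<in> K" "\<forall>i\<in>J. c i \<in> K"
  shows "z i0 + (\<Sum>i\<in>J. c i * z i) \<noteq> 0"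
proof
  assume "z i0 + (\<Sum>i\<in>J. c i * z i) = 0"
  moreover have "(\<Sum>i\<in>insert i0 J. (c(i0 := 1)) i * z i) = z i0 + (\<Sum>i\<in>J. c i * z i)"
    using assms(2,3) by (auto intro!: sum.cong)
  moreover have "\<forall>i\<in>insert i0 J. (c(i0 := 1)) i \<in> K"
    using assms(4,5) by simp
  ultimately have "(c(i0 := 1)) i0 = 0"
    by (intro lin_indep_overD[OF assms(1), of "c(i0 := 1)"]) auto
  then show False
    by simp
qed

section \<open>Non-archimedean absolute values\<close>

locale nonarch_abs =
  fixes absv :: "'c::field \<Rightarrow> real"
  assumes abs_nonneg [simp]: "absv x \<ge> 0"
    and abs_eq_0_iff [simp]: "absv x = 0 \<longleftrightarrow> x = 0"
    and abs_mult [simp]: "absv (x * y) = absv x * absv y"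
    and abs_add_le_max: "absv (x + y) \<le> max (absv x) (absv y)"
begin

lemma abs_0 [simp]: "absv 0 = 0"
  by simp

lemma abs_pos_iff [simp]: "absv x > 0 \<longleftrightarrow> x \<noteq> 0"
  using abs_nonneg[of x] abs_eq_0_iff[of x] by linarith

lemma abs_1 [simp]: "absv 1 = 1"
  using abs_mult[of 1 1] abs_eq_0_iff[of 1] by simp

lemma abs_minus [simp]: "absv (- x) = absv x"
proof -
  have "(absv (- 1))\<^sup>2 = 1"
    using abs_mult[of "- 1" "- 1"] by (simp add: power2_eq_square)
  then have "absv (- 1) = 1"
    using abs_nonneg[of "- 1"] by (simp add: abs_square_eq_1)
  then show ?thesis
    using abs_mult[of "- 1" x] by simp
qed

lemma abs_inverse [simp]: "absv (inverse x) = inverse (absv x)"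
proof (cases "x = 0")
  case False
  then have "absv x * absv (inverse x) = 1"
    by (simp flip: abs_mult)
  then show ?thesis
    by (simp add: inverse_unique)
qed simp

lemma abs_divide [simp]: "absv (x / y) = absv x / absv y"
  by (simp add: divide_inverse)

lemma abs_power [simp]: "absv (x ^ n) = absv x ^ n"
  by (induction n) auto

lemma abs_minus_commute: "absv (x - y) = absv (y - x)"
  by (metis abs_minus minus_diff_eq)

lemma abs_diff_le_max: "absv (x - y) \<le> max (absv x) (absv y)"
  using abs_add_le_max[of x "- y"] by simp

lemma abs_diff_triangle: "absv (x - z) \<le> max (absv (x - y)) (absv (y - z))"
  using abs_add_le_max[of "x - y" "y - z"] by simp

lemma abs_add_eq_left:
  assumes "absv y < absv x"
  shows "absv (x + y) = absv x"
proof -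
  have "absv x \<le> max (absv (x + y)) (absv y)"
    using abs_add_le_max[of "x + y" "- y"] by simp
  then show ?thesis
    using abs_add_le_max[of x y] assms by (auto simp: max_def split: if_splits)
qed

lemma abs_sum_le:
  "finite S \<Longrightarrow> 0 \<le> B \<Longrightarrow> (\<And>i. i \<in> S \<Longrightarrow> absv (f i) \<le> B) \<Longrightarrow> absv (sum f S) \<le> B"
proof (induction S rule: finite_induct)
  case (insert x F)
  then show ?case
    by (simp add: order_trans[OF abs_add_le_max])
qed simp

lemma abs_sum_less:
  "finite S \<Longrightarrow> 0 < B \<Longrightarrow> (\<And>i. i \<in> S \<Longrightarrow> absv (f i) < B) \<Longrightarrow> absv (sum f S) < B"
proof (induction S rule: finite_induct)
  case (insert x F)
  then show ?case
    by (simp add: le_less_trans[OF abs_add_le_max])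
qed simp

definition abs_lim :: "(nat \<Rightarrow> 'c) \<Rightarrow> 'c \<Rightarrow> bool" where
  "abs_lim X L \<longleftrightarrow> (\<forall>\<epsilon>>0. \<forall>\<^sub>F n in sequentially. absv (X n - L) < \<epsilon>)"

definition abs_Cauchy :: "(nat \<Rightarrow> 'c) \<Rightarrow> bool" where
  "abs_Cauchy X \<longleftrightarrow> (\<forall>\<epsilon>>0. \<exists>N. \<forall>m\<ge>N. \<forall>n\<ge>N. absv (X m - X n) < \<epsilon>)"

definition abs_closure :: "'c set \<Rightarrow> 'c set" where
  "abs_closure K = {x. \<forall>\<epsilon>>0. \<exists>y\<in>K. absv (x - y) < \<epsilon>}"

lemma abs_closureD: "x \<in> abs_closure K \<Longrightarrow> \<epsilon> > 0 \<Longrightarrow> \<exists>y\<in>K. absv (x - y) < \<epsilon>"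
  by (simp add: abs_closure_def)

lemma abs_limD: "abs_lim X L \<Longrightarrow> \<epsilon> > 0 \<Longrightarrow> \<forall>\<^sub>F n in sequentially. absv (X n - L) < \<epsilon>"
  by (simp add: abs_lim_def)

lemma abs_lim_const: "abs_lim (\<lambda>n. c) c"
  by (simp add: abs_lim_def)

lemma abs_lim_add:
  assumes "abs_lim X L" "abs_lim Y M"
  shows "abs_lim (\<lambda>n. X n + Y n) (L + M)"
  unfolding abs_lim_def
proof (intro allI impI)
  fix \<epsilon> :: real
  assume "\<epsilon> > 0"
  with assms have "\<forall>\<^sub>F n in sequentially. absv (X n - L) < \<epsilon> \<and> absv (Y n - M) < \<epsilon>"
    by (simp add: abs_limD eventually_conj)
  then show "\<forall>\<^sub>F n in sequentially. absv (X n + Y n - (L + M)) < \<epsilon>"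
  proof eventually_elim
    case (elim n)
    have "absv (X n + Y n - (L + M)) \<le> max (absv (X n - L)) (absv (Y n - M))"
      using abs_add_le_max[of "X n - L" "Y n - M"] by (simp only: add_diff_add)
    with elim show ?case
      by (meson le_less_trans max_less_iff_conj)
  qed
qed

lemma abs_lim_mult_right:
  assumes "abs_lim X L"
  shows "abs_lim (\<lambda>n. X n * c) (L * c)"
proof (cases "c = 0")
  case False
  show ?thesis
    unfolding abs_lim_def
  proof (intro allI impI)
    fix \<epsilon> :: real
    assume "\<epsilon> > 0"
    with False assms have "\<forall>\<^sub>F n in sequentially. absv (X n - L) < \<epsilon> / absv c"
      by (simp add: abs_limD)
    then show "\<forall>\<^sub>F n in sequentially. absv (X n * c - L * c) < \<epsilon>"
      by eventually_elim (use False in \<open>simp add: pos_less_divide_eq flip: left_diff_distrib\<close>)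
  qed
qed (simp add: abs_lim_def)

lemma abs_lim_sum:
  assumes "finite J" "\<And>i. i \<in> J \<Longrightarrow> abs_lim (\<lambda>n. X n i) (L i)"
  shows "abs_lim (\<lambda>n. \<Sum>i\<in>J. X n i) (\<Sum>i\<in>J. L i)"
  using assms by (induction J rule: finite_induct) (simp_all add: abs_lim_const abs_lim_add)

lemma abs_lim_unique:
  assumes "abs_lim X L" "abs_lim X M"
  shows "L = M"
proof (rule ccontr)
  assume "L \<noteq> M"
  then have "\<forall>\<^sub>F n in sequentially. absv (X n - L) < absv (L - M) \<and> absv (X n - M) < absv (L - M)"
    using assms by (simp add: abs_limD eventually_conj)
  then obtain n where "absv (X n - L) < absv (L - M)" "absv (X n - M) < absv (L - M)"
    using eventually_happens'[OF sequentially_bot] by blast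
  then show False
    using abs_diff_triangle[of L M "X n"] abs_minus_commute[of L "X n"] by simp
qed

lemma abs_Cauchy_if_lim:
  assumes "abs_lim X L"
  shows "abs_Cauchy X"
  unfolding abs_Cauchy_def
proof (intro allI impI)
  fix \<epsilon> :: real
  assume "\<epsilon> > 0"
  then obtain N where N: "\<And>n. n \<ge> N \<Longrightarrow> absv (X n - L) < \<epsilon>"
    using abs_limD[OF assms] by (auto simp: eventually_sequentially)
  show "\<exists>N. \<forall>m\<ge>N. \<forall>n\<ge>N. absv (X m - X n) < \<epsilon>"
  proof (intro exI[of _ N] allI impI)
    fix m n
    assume "m \<ge> N" "n \<ge> N"
    then have "absv (X m - L) < \<epsilon>" "absv (L - X n) < \<epsilon>"
      using N abs_minus_commute[of L "X n"] by auto
    then show "absv (X m - X n) < \<epsilon>"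
      using abs_diff_triangle[of "X m" "X n" L] by (meson le_less_trans max_less_iff_conj)
  qed
qed

lemma abs_Cauchy_dominated:
  assumes "abs_Cauchy X" "C > 0" "\<And>m n. C * absv (Y m - Y n) \<le> absv (X m - X n)"
  shows "abs_Cauchy Y"
  unfolding abs_Cauchy_def
proof (intro allI impI)
  fix \<epsilon> :: real
  assume "\<epsilon> > 0"
  with assms(2) have "C * \<epsilon> > 0"
    by simp
  then obtain N where N: "\<And>m n. m \<ge> N \<Longrightarrow> n \<ge> N \<Longrightarrow> absv (X m - X n) < C * \<epsilon>"
    using assms(1) unfolding abs_Cauchy_def by blast
  have "absv (Y m - Y n) < \<epsilon>" if "m \<ge> N" "n \<ge> N" for m n
  proof -
    have "C * absv (Y m - Y n) < C * \<epsilon>"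
      using assms(3) N[OF that] by (rule le_less_trans)
    then show ?thesis
      using assms(2) by simp
  qed
  then show "\<exists>N. \<forall>m\<ge>N. \<forall>n\<ge>N. absv (Y m - Y n) < \<epsilon>"
    by blast
qed

lemma abs_lim_in_abs_closure:
  assumes "abs_lim X L" "\<And>n. X n \<in> K"
  shows "L \<in> abs_closure K"
  unfolding abs_closure_def
proof (intro CollectI allI impI)
  fix \<epsilon> :: real
  assume "\<epsilon> > 0"
  then obtain n where "absv (X n - L) < \<epsilon>"
    using abs_limD[OF assms(1)] eventually_happens'[OF sequentially_bot] by blast
  then show "\<exists>y\<in>K. absv (L - y) < \<epsilon>"
    using assms(2) by (auto simp: abs_minus_commute)
qed

lemma subset_abs_closure: "K \<subseteq> abs_closure K"
  unfolding abs_closure_def by (auto intro!: bexI)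

lemma abs_closure_abs_closure: "abs_closure (abs_closure K) = abs_closure K"
proof
  show "abs_closure (abs_closure K) \<subseteq> abs_closure K"
  proof
    fix x
    assume x: "x \<in> abs_closure (abs_closure K)"
    show "x \<in> abs_closure K"
      unfolding abs_closure_def
    proof (intro CollectI allI impI)
      fix \<epsilon> :: real
      assume "\<epsilon> > 0"
      then obtain y where y: "y \<in> abs_closure K" "absv (x - y) < \<epsilon>"
        using abs_closureD[OF x] by blast
      obtain z where z: "z \<in> K" "absv (y - z) < \<epsilon>"
        using abs_closureD[OF y(1) \<open>\<epsilon> > 0\<close>] by blast
      have "absv (x - z) \<le> max (absv (x - y)) (absv (y - z))"
        by (rule abs_diff_triangle)
      also have "\<dots> < \<epsilon>"
        using y(2) z(2) by simp
      finally show "\<exists>z\<in>K. absv (x - z) < \<epsilon>"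
        using z(1) by blast
    qed
  qed
qed (rule subset_abs_closure)

lemma abs_closure_diff:
  assumes K: "\<And>x y. x \<in> K \<Longrightarrow> y \<in> K \<Longrightarrow> x - y \<in> K"
    and x: "x \<in> abs_closure K" and y: "y \<in> abs_closure K"
  shows "x - y \<in> abs_closure K"
  unfolding abs_closure_def
proof (intro CollectI allI impI)
  fix \<epsilon> :: real
  assume "\<epsilon> > 0"
  then obtain x' y' where x': "x' \<in> K" "absv (x - x') < \<epsilon>" and y': "y' \<in> K" "absv (y - y') < \<epsilon>"
    using abs_closureD[OF x] abs_closureD[OF y] by blast
  have "absv ((x - y) - (x' - y')) \<le> max (absv (x - x')) (absv (y - y'))"
    using abs_diff_le_max[of "x - x'" "y - y'"] by (simp add: algebra_simps)
  also have "\<dots> < \<epsilon>"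
    using x'(2) y'(2) by simp
  finally show "\<exists>z\<in>K. absv (x - y - z) < \<epsilon>"
    using K x'(1) y'(1) by blast
qed

lemma abs_closure_mult:
  assumes K: "\<And>x y. x \<in> K \<Longrightarrow> y \<in> K \<Longrightarrow> x * y \<in> K"
    and x: "x \<in> abs_closure K" and y: "y \<in> abs_closure K"
  shows "x * y \<in> abs_closure K"
  unfolding abs_closure_def
proof (intro CollectI allI impI)
  fix \<epsilon> :: real
  assume "\<epsilon> > 0"
  define B where "B = max 1 (max (absv x) (absv y))"
  have B: "B > 0" "absv x \<le> B"
    by (auto simp: B_def)
  define \<delta> where "\<delta> = min 1 (\<epsilon> / B)"
  have "\<delta> > 0"
    using \<open>\<epsilon> > 0\<close> B by (simp add: \<delta>_def)
  have "\<delta> \<le> \<epsilon> / B"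
    by (simp add: \<delta>_def)
  then have small: "B * \<delta> \<le> \<epsilon>"
    using B by (simp add: pos_le_divide_eq mult.commute)
  obtain x' y' where x': "x' \<in> K" "absv (x - x') < \<delta>" and y': "y' \<in> K" "absv (y - y') < \<delta>"
    using abs_closureD[OF x \<open>\<delta> > 0\<close>] abs_closureD[OF y \<open>\<delta> > 0\<close>] by blast
  have "absv y' \<le> max (absv y) (absv (y - y'))"
    using abs_diff_le_max[of y "y - y'"] by simp
  also have "\<dots> \<le> B"
  proof (intro max.boundedI)
    have "absv (y - y') < 1"
      using y'(2) by (simp add: \<delta>_def)
    then show "absv (y - y') \<le> B"
      by (simp add: B_def le_max_iff_disj)
  qed (simp add: B_def le_max_iff_disj)
  finally have "absv y' \<le> B" .
  have "absv x * absv (y - y') \<le> B * absv (y - y')"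
    using B by (simp add: mult_right_mono)
  also have "\<dots> < B * \<delta>"
    using B y' by simp
  finally have first: "absv x * absv (y - y') < \<epsilon>"
    using small by linarith
  have "absv (x - x') * absv y' \<le> absv (x - x') * B"
    using \<open>absv y' \<le> B\<close> by (simp add: mult_left_mono)
  also have "\<dots> < \<delta> * B"
    using B x' by simp
  finally have second: "absv (x - x') * absv y' < \<epsilon>"
    using small by (simp add: mult.commute)
  have "x * y - x' * y' = x * (y - y') + (x - x') * y'"
    by (simp add: algebra_simps)
  then have "absv (x * y - x' * y') < \<epsilon>"
    using abs_add_le_max[of "x * (y - y')" "(x - x') * y'"] first second by simp
  then show "\<exists>z\<in>K. absv (x * y - z) < \<epsilon>"
    using K x'(1) y'(1) by blast
qed

lemma abs_closure_inverse:
  assumes K: "\<And>x. x \<in> K \<Longrightarrow> inverse x \<in> K" and x: "x \<in> abs_closure K"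
  shows "inverse x \<in> abs_closure K"
proof (cases "x = 0")
  case False
  show ?thesis
    unfolding abs_closure_def
  proof (intro CollectI allI impI)
    fix \<epsilon> :: real
    assume "\<epsilon> > 0"
    then have "min (absv x) (\<epsilon> * absv x * absv x) > 0"
      using False by simp
    then obtain y where y: "y \<in> K" "absv (x - y) < min (absv x) (\<epsilon> * absv x * absv x)"
      using abs_closureD[OF x] by blast
    then have "absv (x + (y - x)) = absv x"
      by (intro abs_add_eq_left) (simp add: abs_minus_commute)
    then have "absv y = absv x"
      by simp
    then have "y \<noteq> 0"
      using False by (metis abs_eq_0_iff)
    with False have "inverse x - inverse y = (y - x) / (x * y)"
      by (simp add: field_simps)
    with \<open>absv y = absv x\<close> have "absv (inverse x - inverse y) = absv (x - y) / (absv x * absv x)"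
      by (simp add: abs_minus_commute)
    also have "\<dots> < \<epsilon>"
      using y False by (simp add: field_simps)
    finally show "\<exists>z\<in>K. absv (inverse x - z) < \<epsilon>"
      using K y(1) by blast
  qed
qed (use x K in simp)

lemma is_subfield_abs_closure:
  assumes "is_subfield K"
  shows "is_subfield (abs_closure K)"
  using assms subset_abs_closure[of K]
  by (auto simp: is_subfield_def intro: abs_closure_diff abs_closure_mult abs_closure_inverse)

lemma abs_has_sumD:
  assumes "abs_has_sum absv f S s" "\<epsilon> > 0"
  obtains F0 where "finite F0" "F0 \<subseteq> S"
    "\<And>F. finite F \<Longrightarrow> F0 \<subseteq> F \<Longrightarrow> F \<subseteq> S \<Longrightarrow> absv (sum f F - s) < \<epsilon>"
proof -
  have "\<exists>F0. finite F0 \<and> F0 \<subseteq> S \<and>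
      (\<forall>F. finite F \<and> F0 \<subseteq> F \<and> F \<subseteq> S \<longrightarrow> absv (sum f F - s) < \<epsilon>)"
    using assms unfolding abs_has_sum_def by simp
  then show ?thesis
    using that by auto
qed

lemma abs_has_sum_unique:
  assumes "abs_has_sum absv f S s" "abs_has_sum absv f S s'"
  shows "s = s'"
proof (rule ccontr)
  assume "s \<noteq> s'"
  then have "absv (s - s') > 0"
    by simp
  obtain F1 where F1: "finite F1" "F1 \<subseteq> S"
      "\<And>F. finite F \<Longrightarrow> F1 \<subseteq> F \<Longrightarrow> F \<subseteq> S \<Longrightarrow> absv (sum f F - s) < absv (s - s')"
    by (rule abs_has_sumD[OF assms(1) \<open>absv (s - s') > 0\<close>], rule that)
  obtain F2 where F2: "finite F2" "F2 \<subseteq> S"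
      "\<And>F. finite F \<Longrightarrow> F2 \<subseteq> F \<Longrightarrow> F \<subseteq> S \<Longrightarrow> absv (sum f F - s') < absv (s - s')"
    by (rule abs_has_sumD[OF assms(2) \<open>absv (s - s') > 0\<close>], rule that)
  let ?F = "F1 \<union> F2"
  have "absv (sum f ?F - s) < absv (s - s')"
    using F1 F2 by (intro F1(3)) auto
  moreover have "absv (sum f ?F - s') < absv (s - s')"
    using F1 F2 by (intro F2(3)) auto
  moreover have "absv (s - s') \<le> max (absv (s - sum f ?F)) (absv (sum f ?F - s'))"
    by (rule abs_diff_triangle)
  ultimately show False
    by (simp add: abs_minus_commute[of s])
qed

lemma abs_infsum_eqI: "abs_has_sum absv f S s \<Longrightarrow> abs_infsum absv f S = s"
  unfolding abs_infsum_def by (blast intro: abs_has_sum_unique)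

lemma abs_has_sum_le:
  assumes "abs_has_sum absv f S s" "0 \<le> B" "\<And>x. x \<in> S \<Longrightarrow> absv (f x) \<le> B"
  shows "absv s \<le> B"
proof (rule ccontr)
  assume "\<not> absv s \<le> B"
  then have "absv s > 0"
    using assms(2) by linarith
  obtain F0 where F0: "finite F0" "F0 \<subseteq> S"
    "\<And>F. finite F \<Longrightarrow> F0 \<subseteq> F \<Longrightarrow> F \<subseteq> S \<Longrightarrow> absv (sum f F - s) < absv s"
    by (rule abs_has_sumD[OF assms(1) \<open>absv s > 0\<close>], rule that)
  then have "absv (sum f F0 - s) < absv s"
    by blast
  moreover have "absv (sum f F0) \<le> B"
    using F0(1,2) assms(2,3) by (intro abs_sum_le) auto
  moreover have "absv s \<le> max (absv (sum f F0 - s)) (absv (sum f F0))"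
    using abs_diff_le_max[of "sum f F0" "sum f F0 - s"] by simp
  ultimately show False
    using \<open>\<not> absv s \<le> B\<close> by linarith
qed

lemma abs_has_sum_cong:
  assumes "abs_has_sum absv f S s" "\<And>x. x \<in> S \<Longrightarrow> f x = g x"
  shows "abs_has_sum absv g S s"
  unfolding abs_has_sum_def
proof (intro allI impI)
  fix \<epsilon> :: real
  assume "\<epsilon> > 0"
  obtain F0 where "finite F0" "F0 \<subseteq> S"
    "\<And>F. finite F \<Longrightarrow> F0 \<subseteq> F \<Longrightarrow> F \<subseteq> S \<Longrightarrow> absv (sum f F - s) < \<epsilon>"
    by (rule abs_has_sumD[OF assms(1) \<open>\<epsilon> > 0\<close>], rule that)
  moreover have "sum g F = sum f F" if "F \<subseteq> S" for F
    using that assms(2) by (intro sum.cong) auto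
  ultimately show "\<exists>F0. finite F0 \<and> F0 \<subseteq> S \<and>
      (\<forall>F. finite F \<and> F0 \<subseteq> F \<and> F \<subseteq> S \<longrightarrow> absv (sum g F - s) < \<epsilon>)"
    by (intro exI[of _ F0]) auto
qed

lemma abs_has_sum_Un_disjoint:
  assumes "abs_has_sum absv f S s" "abs_has_sum absv f T t" "S \<inter> T = {}"
  shows "abs_has_sum absv f (S \<union> T) (s + t)"
  unfolding abs_has_sum_def
proof (intro allI impI)
  fix \<epsilon> :: real
  assume "\<epsilon> > 0"
  obtain F1 where F1: "finite F1" "F1 \<subseteq> S"
    "\<And>F. finite F \<Longrightarrow> F1 \<subseteq> F \<Longrightarrow> F \<subseteq> S \<Longrightarrow> absv (sum f F - s) < \<epsilon>"
    by (rule abs_has_sumD[OF assms(1) \<open>\<epsilon> > 0\<close>], rule that)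
  obtain F2 where F2: "finite F2" "F2 \<subseteq> T"
    "\<And>F. finite F \<Longrightarrow> F2 \<subseteq> F \<Longrightarrow> F \<subseteq> T \<Longrightarrow> absv (sum f F - t) < \<epsilon>"
    by (rule abs_has_sumD[OF assms(2) \<open>\<epsilon> > 0\<close>], rule that)
  have "absv (sum f F - (s + t)) < \<epsilon>" if F: "finite F" "F1 \<union> F2 \<subseteq> F" "F \<subseteq> S \<union> T" for F
  proof -
    have "absv (sum f F - (s + t)) = absv ((sum f (F \<inter> S) - s) + (sum f (F - S) - t))"
      using sum.Int_Diff[OF F(1), of f S] by (simp add: algebra_simps)
    also have "\<dots> \<le> max (absv (sum f (F \<inter> S) - s)) (absv (sum f (F - S) - t))"
      by (rule abs_add_le_max)
    also have "\<dots> < \<epsilon>"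
      using F F1 F2 assms(3) by (auto intro!: F1(3) F2(3))
    finally show ?thesis .
  qed
  then show "\<exists>F0. finite F0 \<and> F0 \<subseteq> S \<union> T \<and>
      (\<forall>F. finite F \<and> F0 \<subseteq> F \<and> F \<subseteq> S \<union> T \<longrightarrow> absv (sum f F - (s + t)) < \<epsilon>)"
    using F1(1,2) F2(1,2) by (intro exI[of _ "F1 \<union> F2"]) auto
qed

lemma imag_abs_le:
  assumes "\<forall>i\<in>{2..r}. c i \<in> K"
  shows "imag_abs absv K r z1 zt \<le> absv (z1 - (\<Sum>i\<in>{2..r}. c i * zt i))"
  unfolding imag_abs_def
proof (rule cInf_lower)
  show "bdd_below {absv (z1 - (\<Sum>i\<in>{2..r}. c i * zt i)) |c. \<forall>i\<in>{2..r}. c i \<in> K}"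
    by (rule bdd_belowI[of _ 0]) auto
qed (use assms in \<open>blast intro: exI[of _ c]\<close>)

lemma dist_to_span_scaled:
  assumes K: "is_subfield K" and J: "finite J" "i0 \<notin> J"
    and \<delta>: "\<forall>c. (\<forall>i\<in>J. c i \<in> K) \<longrightarrow> \<delta> \<le> absv (z i0 + (\<Sum>i\<in>J. c i * z i))"
    and c: "\<forall>i\<in>insert i0 J. c i \<in> K"
  shows "\<delta> * absv (c i0) \<le> absv (\<Sum>i\<in>insert i0 J. c i * z i)"
proof (cases "c i0 = 0")
  case False
  have "\<delta> * absv (c i0) \<le> absv (z i0 + (\<Sum>i\<in>J. (c i / c i0) * z i)) * absv (c i0)"
    using c K by (intro mult_right_mono \<delta>[rule_format]) (simp_all add: subfield_divide)
  also have "\<dots> = absv (c i0 * (z i0 + (\<Sum>i\<in>J. (c i / c i0) * z i)))"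
    by simp
  also have "c i0 * (z i0 + (\<Sum>i\<in>J. (c i / c i0) * z i)) = (\<Sum>i\<in>insert i0 J. c i * z i)"
    using False J by (simp add: algebra_simps sum_distrib_left)
  finally show ?thesis .
qed simp

lemma coeff_bound_insert:
  assumes K: "is_subfield K" and J: "finite J" "i0 \<notin> J"
    and C: "C > 0" "\<forall>c. (\<forall>i\<in>J. c i \<in> K) \<longrightarrow> (\<forall>i\<in>J. C * absv (c i) \<le> absv (\<Sum>i\<in>J. c i * z i))"
    and \<delta>: "\<delta> > 0" "\<forall>c. (\<forall>i\<in>J. c i \<in> K) \<longrightarrow> \<delta> \<le> absv (z i0 + (\<Sum>i\<in>J. c i * z i))"
  shows "\<exists>C'>0. \<forall>c. (\<forall>i\<in>insert i0 J. c i \<in> K) \<longrightarrow>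
           (\<forall>i\<in>insert i0 J. C' * absv (c i) \<le> absv (\<Sum>i\<in>insert i0 J. c i * z i))"
proof (intro exI[of _ "min \<delta> (C / max 1 (absv (z i0) / \<delta>))"] conjI allI impI ballI)
  define M where "M = max 1 (absv (z i0) / \<delta>)"
  have M: "M \<ge> 1"
    by (simp add: M_def)
  have "absv (z i0) = absv (z i0) / \<delta> * \<delta>"
    using \<delta>(1) by simp
  also have "\<dots> \<le> M * \<delta>"
    using \<delta>(1) by (intro mult_right_mono) (auto simp: M_def)
  finally have "absv (z i0) \<le> M * \<delta>" .
  show "min \<delta> (C / max 1 (absv (z i0) / \<delta>)) > 0"
    using C(1) \<delta>(1) by simp
  fix c i
  assume c: "\<forall>i\<in>insert i0 J. c i \<in> K" and i: "i \<in> insert i0 J"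
  define S where "S = (\<Sum>i\<in>insert i0 J. c i * z i)"
  have S: "S = c i0 * z i0 + (\<Sum>i\<in>J. c i * z i)"
    using J by (simp add: S_def)
  have i0_bound: "\<delta> * absv (c i0) \<le> absv S"
    unfolding S_def using K J \<delta>(2) c by (rule dist_to_span_scaled)
  have J_bound: "C * absv (c j) \<le> M * absv S" if "j \<in> J" for j
  proof -
    have "C * absv (c j) \<le> absv (S - c i0 * z i0)"
      using C(2)[rule_format, of c j] c that by (simp add: S)
    also have "\<dots> \<le> max (absv S) (absv (c i0) * absv (z i0))"
      using abs_diff_le_max[of S "c i0 * z i0"] by simp
    also have "\<dots> \<le> M * absv S"
    proof (rule max.boundedI)
      show "absv S \<le> M * absv S"
        using M(1) mult_right_mono[of 1 M "absv S"] by simp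
      have "absv (c i0) * absv (z i0) \<le> absv (c i0) * (M * \<delta>)"
        using \<open>absv (z i0) \<le> M * \<delta>\<close> by (simp add: mult_left_mono)
      also have "\<dots> = M * (\<delta> * absv (c i0))"
        by (simp add: mult_ac)
      also have "\<dots> \<le> M * absv S"
        using i0_bound M(1) by (simp add: mult_left_mono)
      finally show "absv (c i0) * absv (z i0) \<le> M * absv S" .
    qed
    finally show ?thesis .
  qed
  have "min \<delta> (C / M) * absv (c i) \<le> absv S"
  proof (cases "i = i0")
    case True
    have "min \<delta> (C / M) * absv (c i0) \<le> \<delta> * absv (c i0)"
      by (intro mult_right_mono) auto
    with True i0_bound show ?thesis
      by simp
  next
    case False
    have "min \<delta> (C / M) * absv (c i) \<le> C / M * absv (c i)"
      by (intro mult_right_mono) auto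
    also have "\<dots> \<le> absv S"
      using J_bound[of i] False i M(1) by (simp add: field_simps)
    finally show ?thesis .
  qed
  then show "min \<delta> (C / max 1 (absv (z i0) / \<delta>)) * absv (c i) \<le> absv (\<Sum>i\<in>insert i0 J. c i * z i)"
    by (simp add: M_def S_def)
qed

end

section \<open>Complete non-archimedean fields\<close>

locale complete_nonarch_abs = nonarch_abs +
  assumes abs_complete: "abs_Cauchy X \<Longrightarrow> \<exists>L. abs_lim X L"
begin

lemma eventually_inverse_Suc_less:
  "\<epsilon> > 0 \<Longrightarrow> \<forall>\<^sub>F n in sequentially. inverse (real (Suc n)) < \<epsilon>"
  using order_tendstoD(2)[OF LIMSEQ_inverse_real_of_nat] .

lemma abs_summable_if_finite_large_terms:
  assumes fin: "\<And>\<epsilon>. \<epsilon> > 0 \<Longrightarrow> finite {x \<in> S. \<epsilon> \<le> absv (f x)}"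
  shows "\<exists>s. abs_has_sum absv f S s"
proof -
  \<comment> \<open>By the ultrametric inequality, any finite sum of terms outside F n is smaller than 1 / (n + 1).\<close>
  define F where "F n = {x \<in> S. inverse (real (Suc n)) \<le> absv (f x)}" for n
  define s where "s n = sum f (F n)" for n
  have F: "finite (F n)" "F n \<subseteq> S" for n
    using fin by (auto simp: F_def)
  have tail: "absv (sum f G) < inverse (real (Suc n))" if "finite G" "G \<subseteq> S" "G \<inter> F n = {}" for G n
    using that by (intro abs_sum_less) (auto simp: F_def)
  have step: "absv (s m - s n) < inverse (real (Suc n))" if "n \<le> m" for m n
  proof -
    have "inverse (real (Suc m)) \<le> inverse (real (Suc n))"
      using that by (simp add: le_imp_inverse_le)
    then have "F n \<subseteq> F m"
      unfolding F_def using order_trans by blast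
    then have "s m - s n = sum f (F m - F n)"
      using F by (simp add: s_def sum_diff)
    then show ?thesis
      using F tail[of "F m - F n" n] by auto
  qed
  have "abs_Cauchy s"
    unfolding abs_Cauchy_def
  proof (intro allI impI)
    fix \<epsilon> :: real
    assume "\<epsilon> > 0"
    then obtain N where N: "inverse (real (Suc N)) < \<epsilon>"
      using eventually_happens'[OF sequentially_bot eventually_inverse_Suc_less] by blast
    have "absv (s m - s n) < \<epsilon>" if "m \<ge> N" "n \<ge> N" for m n
      using step[OF that(1)] step[OF that(2)] N abs_diff_triangle[of "s m" "s n" "s N"]
        abs_minus_commute[of "s N" "s n"] by simp
    then show "\<exists>N. \<forall>m\<ge>N. \<forall>n\<ge>N. absv (s m - s n) < \<epsilon>"
      by blast
  qed
  then obtain L where L: "abs_lim s L"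
    using abs_complete by blast
  have "abs_has_sum absv f S L"
    unfolding abs_has_sum_def
  proof (intro allI impI)
    fix \<epsilon> :: real
    assume "\<epsilon> > 0"
    then have "\<forall>\<^sub>F n in sequentially. absv (s n - L) < \<epsilon> \<and> inverse (real (Suc n)) < \<epsilon>"
      using abs_limD[OF L] eventually_inverse_Suc_less by (simp add: eventually_conj)
    then obtain n where n: "absv (s n - L) < \<epsilon>" "inverse (real (Suc n)) < \<epsilon>"
      using eventually_happens'[OF sequentially_bot] by blast
    have "absv (sum f G - L) < \<epsilon>" if G: "finite G" "F n \<subseteq> G" "G \<subseteq> S" for G
    proof -
      have "absv (sum f (G - F n)) < inverse (real (Suc n))"
        using G by (intro tail) auto
      have "absv (sum f G - L) = absv ((s n - L) + sum f (G - F n))"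
        using G F by (simp add: s_def sum_diff)
      also have "\<dots> \<le> max (absv (s n - L)) (absv (sum f (G - F n)))"
        by (rule abs_add_le_max)
      also have "\<dots> < \<epsilon>"
        using n \<open>absv (sum f (G - F n)) < inverse (real (Suc n))\<close> by simp
      finally show ?thesis .
    qed
    then show "\<exists>F0. finite F0 \<and> F0 \<subseteq> S \<and>
        (\<forall>G. finite G \<and> F0 \<subseteq> G \<and> G \<subseteq> S \<longrightarrow> absv (sum f G - L) < \<epsilon>)"
      using F by (intro exI[of _ "F n"]) auto
  qed
  then show ?thesis ..
qed

lemma dist_to_span_pos:
  assumes K: "is_subfield K" "abs_closure K \<subseteq> K"
    and J: "finite J" "i0 \<notin> J" and indep: "lin_indep_over K (insert i0 J) z"
    and C: "C > 0" "\<forall>c. (\<forall>i\<in>J. c i \<in> K) \<longrightarrow> (\<forall>i\<in>J. C * absv (c i) \<le> absv (\<Sum>i\<in>J. c i * z i))"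
  shows "\<exists>\<delta>>0. \<forall>c. (\<forall>i\<in>J. c i \<in> K) \<longrightarrow> \<delta> \<le> absv (z i0 + (\<Sum>i\<in>J. c i * z i))"
proof (rule ccontr)
  \<comment> \<open>Otherwise some coefficients c n make z i0 + \<Sum> c n i * z i tend to 0; by the bound for J
     they are Cauchy, and their limits in the closed field K give a linear relation.\<close>
  assume "\<not> ?thesis"
  then have "\<forall>n. \<exists>c. (\<forall>i\<in>J. c i \<in> K) \<and> absv (z i0 + (\<Sum>i\<in>J. c i * z i)) < inverse (real (Suc n))"
    by (simp add: not_le)
  then obtain c where c: "\<And>n. \<forall>i\<in>J. c n i \<in> K"
    "\<And>n. absv (z i0 + (\<Sum>i\<in>J. c n i * z i)) < inverse (real (Suc n))"
    by metis
  define e where "e n = z i0 + (\<Sum>i\<in>J. c n i * z i)" for n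
  have e: "abs_lim e 0"
    unfolding abs_lim_def
  proof (intro allI impI)
    fix \<epsilon> :: real
    assume "\<epsilon> > 0"
    from eventually_inverse_Suc_less[OF this] show "\<forall>\<^sub>F n in sequentially. absv (e n - 0) < \<epsilon>"
    proof eventually_elim
      case (elim n)
      then show ?case
        using c(2)[of n] by (simp add: e_def)
    qed
  qed
  have "abs_Cauchy (\<lambda>n. c n i)" if "i \<in> J" for i
  proof (rule abs_Cauchy_dominated[OF abs_Cauchy_if_lim[OF e] C(1)])
    fix m n
    have "e m - e n = (\<Sum>i\<in>J. (c m i - c n i) * z i)"
      by (simp add: e_def left_diff_distrib sum_subtractf)
    moreover have "\<forall>i\<in>J. c m i - c n i \<in> K"
      using c(1) K(1) by (simp add: subfield_diff)
    ultimately show "C * absv (c m i - c n i) \<le> absv (e m - e n)"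
      using C(2)[rule_format, of "\<lambda>i. c m i - c n i" i] that by simp
  qed
  then have "\<forall>i\<in>J. \<exists>l. abs_lim (\<lambda>n. c n i) l"
    using abs_complete by blast
  then obtain L where L: "\<And>i. i \<in> J \<Longrightarrow> abs_lim (\<lambda>n. c n i) (L i)"
    by metis
  have "abs_lim e (z i0 + (\<Sum>i\<in>J. L i * z i))"
    unfolding e_def by (intro abs_lim_add abs_lim_const abs_lim_sum J(1) abs_lim_mult_right L)
  then have "z i0 + (\<Sum>i\<in>J. L i * z i) = 0"
    using e abs_lim_unique by blast
  moreover have "\<forall>i\<in>J. L i \<in> K"
    using abs_lim_in_abs_closure[OF L c(1)[rule_format]] K(2) by blast
  ultimately show False
    using lin_indep_over_insert_not_in_span[OF indep J subfield_1[OF K(1)]] by blast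
qed

lemma lin_indep_over_coeff_bound:
  assumes K: "is_subfield K" "abs_closure K \<subseteq> K" and "finite I" "lin_indep_over K I z"
  shows "\<exists>C>0. \<forall>c. (\<forall>i\<in>I. c i \<in> K) \<longrightarrow> (\<forall>i\<in>I. C * absv (c i) \<le> absv (\<Sum>i\<in>I. c i * z i))"
  using assms(3,4)
proof (induction I rule: finite_induct)
  case empty
  show ?case
    by (intro exI[of _ "1::real"]) simp
next
  case (insert i0 J)
  have "lin_indep_over K J z"
    using insert.prems by (rule lin_indep_over_subset) (use insert.hyps K(1) in \<open>auto simp: subfield_0\<close>)
  then obtain C where C: "C > 0"
    "\<forall>c. (\<forall>i\<in>J. c i \<in> K) \<longrightarrow> (\<forall>i\<in>J. C * absv (c i) \<le> absv (\<Sum>i\<in>J. c i * z i))"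
    using insert.IH by blast
  obtain \<delta> where \<delta>: "\<delta> > 0" "\<forall>c. (\<forall>i\<in>J. c i \<in> K) \<longrightarrow> \<delta> \<le> absv (z i0 + (\<Sum>i\<in>J. c i * z i))"
    using dist_to_span_pos[OF K insert.hyps insert.prems C] by blast
  show ?case
    by (rule coeff_bound_insert[OF K(1) insert.hyps C \<delta>])
qed

end

section \<open>Lattice sums over the polynomial ring A\<close>

lemma sum_atLeastAtMost_1_split:
  "1 \<le> r \<Longrightarrow> (\<Sum>i\<in>{1..r}. g i) = g 1 + (\<Sum>i\<in>{2..r}. g (i::nat))"
  by (simp add: sum.atLeast_Suc_atMost numeral_2_eq_2)

locale Cinf_field = complete_nonarch_abs absv for absv :: "'c::field \<Rightarrow> real" +
  fixes q :: nat and \<theta> :: 'c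
  assumes q_char_power: "\<exists>p n. prime p \<and> n > 0 \<and> q = p ^ n \<and> of_nat p = (0::'c)"
    and abs_theta [simp]: "absv \<theta> = real q"
begin

lemma q_ge_2: "q \<ge> 2"
proof -
  obtain p n where p: "prime p" "n > 0" "q = p ^ n"
    using q_char_power by blast
  have "2 \<le> p"
    using p(1) by (rule prime_ge_2_nat)
  also have "p \<le> p ^ n"
    using p(2) \<open>2 \<le> p\<close> by (simp add: self_le_power)
  finally show ?thesis
    using p(3) by simp
qed

lemma power_q_add: "(x + y) ^ q = x ^ q + (y::'c) ^ q"
proof -
  obtain p n where p: "prime p" "q = p ^ n" "of_nat p = (0::'c)"
    using q_char_power by blast
  have "CHAR('c) dvd p"
    using p(3) by (simp add: of_nat_eq_0_iff_char_dvd)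
  moreover have "CHAR('c) \<noteq> 1"
    by simp
  ultimately have "CHAR('c) = p"
    using p(1) unfolding prime_nat_iff by blast
  then show ?thesis
    using freshmans_dream'[of q n x y] p by simp
qed

lemma Fq_0 [simp]: "0 \<in> (Fq q :: 'c set)"
  using q_ge_2 by (simp add: Fq_def)

lemma Fq_add: "x \<in> Fq q \<Longrightarrow> y \<in> Fq q \<Longrightarrow> x + (y::'c) \<in> Fq q"
  by (simp add: Fq_def power_q_add)

lemma Fq_diff: "x \<in> Fq q \<Longrightarrow> y \<in> Fq q \<Longrightarrow> x - (y::'c) \<in> Fq q"
  using power_q_add[of "x - y" y] by (simp add: Fq_def eq_diff_eq)

lemma Fq_mult: "x \<in> Fq q \<Longrightarrow> y \<in> Fq q \<Longrightarrow> x * (y::'c) \<in> Fq q"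
  by (simp add: Fq_def power_mult_distrib)

lemma Fq_sum: "(\<And>i. i \<in> S \<Longrightarrow> f i \<in> Fq q) \<Longrightarrow> sum f S \<in> (Fq q :: 'c set)"
  by (induction S rule: infinite_finite_induct) (auto intro: Fq_add)

lemma finite_Fq: "finite (Fq q :: 'c set)"
proof -
  let ?P = "monom (1::'c) q - monom 1 1"
  have "coeff ?P q = 1"
    using q_ge_2 by (simp add: coeff_monom)
  then have "?P \<noteq> 0"
    by (metis coeff_0 zero_neq_one)
  then have "finite {x. poly ?P x = 0}"
    by (rule poly_roots_finite)
  moreover have "Fq q = {x. poly ?P x = 0}"
    by (simp add: Fq_def poly_monom)
  ultimately show ?thesis
    by (simp only:)
qed

lemma abs_Fq:
  assumes "x \<in> Fq q" "x \<noteq> 0"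
  shows "absv x = 1"
proof -
  obtain m where m: "q = Suc m" "m > 0"
    using q_ge_2 by (cases q) auto
  have "absv (x ^ q) = absv x"
    using assms(1) by (simp add: Fq_def)
  then have "absv x * absv x ^ m = absv x * 1"
    by (simp add: m)
  then have "absv x ^ m = 1 ^ m"
    using assms(2) by simp
  then show ?thesis
    using m(2) power_eq_iff_eq_base[of m "absv x" 1] by simp
qed

lemma Apoly_1: "1 \<in> (Apoly q :: 'c poly set)"
  using q_ge_2 by (simp add: Apoly_def Fq_def coeff_1)

lemma Apoly_diff: "a \<in> Apoly q \<Longrightarrow> b \<in> Apoly q \<Longrightarrow> a - (b::'c poly) \<in> Apoly q"
  by (simp add: Apoly_def Fq_diff)

lemma Apoly_mult: "a \<in> Apoly q \<Longrightarrow> b \<in> Apoly q \<Longrightarrow> a * (b::'c poly) \<in> Apoly q"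
  by (simp add: Apoly_def coeff_mult Fq_sum Fq_mult)

lemma pCons_in_Apoly_iff: "pCons c a \<in> Apoly q \<longleftrightarrow> c \<in> Fq q \<and> (a::'c poly) \<in> Apoly q"
proof
  assume "pCons c a \<in> Apoly q"
  then have "coeff (pCons c a) 0 \<in> Fq q" "\<And>i. coeff (pCons c a) (Suc i) \<in> Fq q"
    unfolding Apoly_def by blast+
  then show "c \<in> Fq q \<and> a \<in> Apoly q"
    by (simp add: Apoly_def)
qed (simp add: Apoly_def coeff_pCons split: nat.split)

lemma abs_Fq_le_1: "x \<in> Fq q \<Longrightarrow> absv x \<le> 1"
  using abs_Fq[of x] by (cases "x = 0") simp_all

lemma abs_poly_theta:
  "a \<in> Apoly q \<Longrightarrow> a \<noteq> 0 \<Longrightarrow> absv (poly a \<theta>) = real q ^ degree a"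
proof (induction a rule: pCons_induct)
  case (pCons c a)
  show ?case
  proof (cases "a = 0")
    case True
    then show ?thesis
      using pCons.prems abs_Fq by (simp add: pCons_in_Apoly_iff)
  next
    case False
    then have high: "absv (\<theta> * poly a \<theta>) = real q ^ Suc (degree a)"
      using pCons by (simp add: pCons_in_Apoly_iff)
    have "absv c \<le> 1"
      using pCons.prems abs_Fq_le_1 by (simp add: pCons_in_Apoly_iff)
    also have "1 < real q ^ Suc (degree a)"
      using q_ge_2 by (intro one_less_power) auto
    finally have "absv (\<theta> * poly a \<theta> + c) = absv (\<theta> * poly a \<theta>)"
      by (intro abs_add_eq_left) (simp only: high)
    then show ?thesis
      using False high by (simp add: add.commute)
  qed
qed simp

lemma abs_poly_theta_ge_1: "a \<in> Apoly q \<Longrightarrow> a \<noteq> 0 \<Longrightarrow> absv (poly a \<theta>) \<ge> 1"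
  using abs_poly_theta[of a] q_ge_2 by simp

lemma poly_theta_nonzero: "a \<in> Apoly q \<Longrightarrow> a \<noteq> 0 \<Longrightarrow> poly a \<theta> \<noteq> 0"
  using abs_poly_theta_ge_1[of a] by auto

lemma abs_poly_le_1: "a \<in> Apoly q \<Longrightarrow> absv t \<le> 1 \<Longrightarrow> absv (poly a t) \<le> 1"
proof (induction a rule: pCons_induct)
  case (pCons c a)
  then have "absv c \<le> 1" "absv (t * poly a t) \<le> 1"
    using abs_Fq_le_1 by (auto simp: pCons_in_Apoly_iff mult_le_one)
  then show ?case
    using abs_add_le_max[of c "t * poly a t"] by simp
qed simp

lemma finite_Apoly_degree_le: "finite {a \<in> (Apoly q :: 'c poly set). degree a \<le> d}"
proof -
  let ?coeffs = "\<lambda>a::'c poly. \<lambda>i. if i \<le> d then coeff a i else 0"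
  have "inj_on ?coeffs {a \<in> Apoly q. degree a \<le> d}"
  proof (intro inj_onI poly_eqI)
    fix a b :: "'c poly" and i
    assume a: "a \<in> {a \<in> Apoly q. degree a \<le> d}" and b: "b \<in> {a \<in> Apoly q. degree a \<le> d}"
      and eq: "?coeffs a = ?coeffs b"
    show "coeff a i = coeff b i"
    proof (cases "i \<le> d")
      case True
      then show ?thesis
        using fun_cong[OF eq, of i] by simp
    qed (use a b in \<open>simp add: coeff_eq_0\<close>)
  qed
  moreover have "?coeffs ` {a \<in> Apoly q. degree a \<le> d} \<subseteq>
      {f. \<forall>i. (i \<in> {..d} \<longrightarrow> f i \<in> Fq q) \<and> (i \<notin> {..d} \<longrightarrow> f i = 0)}"
    by (auto simp: Apoly_def)
  then have "finite (?coeffs ` {a \<in> Apoly q. degree a \<le> d})"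
    using finite_set_of_finite_funs[OF finite_atMost finite_Fq] finite_subset by blast
  ultimately show ?thesis
    by (rule finite_imageD[rotated])
qed

lemma finite_Apoly_abs_le: "finite {a \<in> Apoly q. absv (poly a \<theta>) \<le> M}"
proof -
  obtain d :: nat where d: "M < real q ^ d"
    using real_arch_pow[of "real q" M] q_ge_2 by auto
  have "degree a \<le> d" if "a \<in> Apoly q" "absv (poly a \<theta>) \<le> M" for a
  proof (cases "a = 0")
    case False
    then have "real q ^ degree a < real q ^ d"
      using abs_poly_theta that d by simp
    then show ?thesis
      using q_ge_2 by (simp add: power_strict_increasing_iff)
  qed simp
  then show ?thesis
    by (blast intro: finite_subset[OF _ finite_Apoly_degree_le])
qed

lemma Apoly_0 [simp]: "0 \<in> (Apoly q :: 'c poly set)"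
  by (simp add: Apoly_def)

lemma tuples_insert:
  assumes "i0 \<notin> I"
  shows "tuples q (insert i0 I) = (tuples q I :: (nat \<Rightarrow> 'c poly) set) \<union> {a \<in> tuples q (insert i0 I). a i0 \<noteq> 0}"
    and "tuples q I \<inter> {a \<in> tuples q (insert i0 I). a i0 \<noteq> 0} = {}"
  using assms by (auto simp: tuples_def)

lemma tuples_in_Apoly: "a \<in> tuples q I \<Longrightarrow> (a i :: 'c poly) \<in> Apoly q"
  by (cases "i \<in> I") (auto simp: tuples_def Apoly_def)

lemma is_subfield_Fq_theta: "is_subfield (Fq_theta q \<theta>)"
proof -
  have frac: "poly a \<theta> / poly b \<theta> \<in> Fq_theta q \<theta>" if "a \<in> Apoly q" "b \<in> Apoly q" "b \<noteq> 0" for a b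
    using that unfolding Fq_theta_def by blast
  have "x - y \<in> Fq_theta q \<theta> \<and> x * y \<in> Fq_theta q \<theta>"
    if x: "x \<in> Fq_theta q \<theta>" and y: "y \<in> Fq_theta q \<theta>" for x y
  proof -
    obtain a b c d where ab: "a \<in> Apoly q" "b \<in> Apoly q" "b \<noteq> 0" "x = poly a \<theta> / poly b \<theta>"
      and cd: "c \<in> Apoly q" "d \<in> Apoly q" "d \<noteq> 0" "y = poly c \<theta> / poly d \<theta>"
      using x y unfolding Fq_theta_def by blast
    then have "poly b \<theta> \<noteq> 0" "poly d \<theta> \<noteq> 0"
      by (simp_all add: poly_theta_nonzero)
    then have "x - y = poly (a * d - c * b) \<theta> / poly (b * d) \<theta>" "x * y = poly (a * c) \<theta> / poly (b * d) \<theta>"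
      unfolding ab(4) cd(4) by (simp_all add: field_simps)
    then show ?thesis
      using frac[of "a * d - c * b" "b * d"] frac[of "a * c" "b * d"] ab cd
      by (simp add: Apoly_diff Apoly_mult)
  qed
  moreover have "inverse x \<in> Fq_theta q \<theta>" if x: "x \<in> Fq_theta q \<theta>" for x
  proof -
    obtain a b where "a \<in> Apoly q" "b \<in> Apoly q" "b \<noteq> 0" "x = poly a \<theta> / poly b \<theta>"
      using x unfolding Fq_theta_def by blast
    then show ?thesis
      using frac[of 0 1] frac[of b a] Apoly_1 by (cases "a = 0") (simp_all add: Apoly_def)
  qed
  ultimately show ?thesis
    using frac[of 0 1] frac[of 1 1] Apoly_1 by (simp add: is_subfield_def Apoly_def)
qed

lemma Kinf_eq_abs_closure: "Kinf absv q \<theta> = abs_closure (Fq_theta q \<theta>)"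
  by (simp add: Kinf_def abs_closure_def)

lemma is_subfield_Kinf: "is_subfield (Kinf absv q \<theta>)"
  unfolding Kinf_eq_abs_closure by (rule is_subfield_abs_closure[OF is_subfield_Fq_theta])

lemma abs_closure_Kinf: "abs_closure (Kinf absv q \<theta>) \<subseteq> Kinf absv q \<theta>"
  by (simp add: Kinf_eq_abs_closure abs_closure_abs_closure)

lemma poly_theta_in_Kinf: "a \<in> Apoly q \<Longrightarrow> poly a \<theta> \<in> Kinf absv q \<theta>"
  unfolding Kinf_eq_abs_closure Fq_theta_def
  using Apoly_1 by (intro subsetD[OF subset_abs_closure]) force

lemma finite_tuples_abs_le:
  assumes "finite I" "lin_indep_over (Kinf absv q \<theta>) I z"
  shows "finite {a \<in> tuples q I. absv (\<Sum>i\<in>I. poly (a i) \<theta> * z i) \<le> M}"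
proof -
  obtain C where C: "C > 0"
    "\<forall>c. (\<forall>i\<in>I. c i \<in> Kinf absv q \<theta>) \<longrightarrow> (\<forall>i\<in>I. C * absv (c i) \<le> absv (\<Sum>i\<in>I. c i * z i))"
    using lin_indep_over_coeff_bound[OF is_subfield_Kinf abs_closure_Kinf assms] by blast
  let ?P = "{p \<in> Apoly q. absv (poly p \<theta>) \<le> M / C}"
  have "a i \<in> ?P" if a: "a \<in> tuples q I" "absv (\<Sum>i\<in>I. poly (a i) \<theta> * z i) \<le> M" and i: "i \<in> I"
    for a i
  proof -
    have "\<forall>i\<in>I. poly (a i) \<theta> \<in> Kinf absv q \<theta>"
      using a(1) by (simp add: tuples_in_Apoly poly_theta_in_Kinf)
    then have "C * absv (poly (a i) \<theta>) \<le> M"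
      using C(2) i a(2) by force
    then show ?thesis
      using C(1) a(1) by (simp add: tuples_in_Apoly field_simps)
  qed
  then have "{a \<in> tuples q I. absv (\<Sum>i\<in>I. poly (a i) \<theta> * z i) \<le> M}
      \<subseteq> {a. \<forall>i. (i \<in> I \<longrightarrow> a i \<in> ?P) \<and> (i \<notin> I \<longrightarrow> a i = 0)}"
    by (auto simp: tuples_def)
  moreover have "finite {a. \<forall>i. (i \<in> I \<longrightarrow> a i \<in> ?P) \<and> (i \<notin> I \<longrightarrow> a i = 0)}"
    using finite_set_of_finite_funs[OF assms(1) finite_Apoly_abs_le] .
  ultimately show ?thesis
    by (rule finite_subset)
qed

lemma lattice_sum_summable:
  assumes "finite I" "lin_indep_over (Kinf absv q \<theta>) I z" "absv t \<le> 1"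
    and "S \<subseteq> tuples q I" "N > 0"
  shows "\<exists>s. abs_has_sum absv (\<lambda>a. poly (a j) t / (\<Sum>i\<in>I. poly (a i) \<theta> * z i) ^ N) S s"
proof (rule abs_summable_if_finite_large_terms)
  fix \<epsilon> :: real
  assume "\<epsilon> > 0"
  have "absv (\<Sum>i\<in>I. poly (a i) \<theta> * z i) \<le> max 1 (1 / \<epsilon>)"
    if a: "a \<in> S" and large: "\<epsilon> \<le> absv (poly (a j) t / (\<Sum>i\<in>I. poly (a i) \<theta> * z i) ^ N)" for a
  proof (cases "absv (\<Sum>i\<in>I. poly (a i) \<theta> * z i) \<le> 1")
    case False
    define x where "x = absv (\<Sum>i\<in>I. poly (a i) \<theta> * z i)"
    have "x \<le> x ^ N"
      using False \<open>N > 0\<close> by (simp add: x_def self_le_power)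
    have "\<epsilon> \<le> absv (poly (a j) t) / x ^ N"
      using large by (simp add: x_def)
    also have "\<dots> \<le> 1 / x"
      using False abs_poly_le_1[OF tuples_in_Apoly assms(3)] a assms(4) \<open>x \<le> x ^ N\<close>
      by (intro frac_le) (auto simp: x_def)
    finally have "\<epsilon> \<le> 1 / x" .
    moreover have "x > 0"
      using False unfolding x_def by linarith
    ultimately have "\<epsilon> * x \<le> 1"
      by (simp add: pos_le_divide_eq)
    then have "x \<le> 1 / \<epsilon>"
      using \<open>\<epsilon> > 0\<close> by (simp add: pos_le_divide_eq mult.commute)
    then show ?thesis
      by (simp add: x_def le_max_iff_disj)
  qed simp
  then have "{a \<in> S. \<epsilon> \<le> absv (poly (a j) t / (\<Sum>i\<in>I. poly (a i) \<theta> * z i) ^ N)}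
      \<subseteq> {a \<in> tuples q I. absv (\<Sum>i\<in>I. poly (a i) \<theta> * z i) \<le> max 1 (1 / \<epsilon>)}"
    using assms(4) by blast
  then show "finite {a \<in> S. \<epsilon> \<le> absv (poly (a j) t / (\<Sum>i\<in>I. poly (a i) \<theta> * z i) ^ N)}"
    using finite_tuples_abs_le[OF assms(1,2)] by (rule finite_subset)
qed

lemma abs_le_abs_lattice_form:
  assumes r: "1 \<le> r" and a: "a \<in> tuples q {1..r}" "a 1 \<noteq> 0"
    and z1: "absv z1 = imag_abs absv (Kinf absv q \<theta>) r z1 zt"
  shows "absv z1 \<le> absv (\<Sum>i\<in>{1..r}. poly (a i) \<theta> * (zt(1 := z1)) i)"
proof -
  define b where "b = poly (a 1) \<theta>"
  have b: "absv b \<ge> 1" "b \<noteq> 0"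
    using a tuples_in_Apoly abs_poly_theta_ge_1 poly_theta_nonzero by (simp_all add: b_def)
  define c where "c i = - (poly (a i) \<theta> / b)" for i
  have "\<forall>i\<in>{2..r}. c i \<in> Kinf absv q \<theta>"
    using is_subfield_Kinf a(1)
    by (simp add: c_def b_def subfield_minus subfield_divide poly_theta_in_Kinf tuples_in_Apoly)
  have "(\<Sum>i\<in>{1..r}. poly (a i) \<theta> * (zt(1 := z1)) i) = b * z1 + (\<Sum>i\<in>{2..r}. poly (a i) \<theta> * zt i)"
    using sum_atLeastAtMost_1_split[OF r, of "\<lambda>i. poly (a i) \<theta> * (zt(1 := z1)) i"] by (simp add: b_def)
  also have "\<dots> = b * (z1 - (\<Sum>i\<in>{2..r}. c i * zt i))"
    using b(2) by (simp add: c_def distrib_left sum_distrib_left sum_negf)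
  finally have lattice_form: "(\<Sum>i\<in>{1..r}. poly (a i) \<theta> * (zt(1 := z1)) i) = b * (z1 - (\<Sum>i\<in>{2..r}. c i * zt i))" .
  have "absv z1 \<le> absv (z1 - (\<Sum>i\<in>{2..r}. c i * zt i))"
    using z1 imag_abs_le[OF \<open>\<forall>i\<in>{2..r}. c i \<in> Kinf absv q \<theta>\<close>] by simp
  also have "\<dots> \<le> absv b * absv (z1 - (\<Sum>i\<in>{2..r}. c i * zt i))"
    using b(1) mult_right_mono[of 1 "absv b"] by simp
  finally show ?thesis
    unfolding lattice_form abs_mult .
qed

lemma lattice_sum_minus_limit_le:
  assumes r: "1 \<le> r" and indep: "lin_indep_over (Kinf absv q \<theta>) {1..r} (zt(1 := z1))"
    and t: "absv t \<le> 1" and N: "N > 0"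
    and z1: "absv z1 = imag_abs absv (Kinf absv q \<theta>) r z1 zt"
    and L: "abs_has_sum absv (\<lambda>a. poly (a j) t / (\<Sum>i\<in>{2..r}. poly (a i) \<theta> * zt i) ^ N)
      (tuples q {2..r}) L"
  shows "absv (abs_infsum absv (\<lambda>a. poly (a j) t / (\<Sum>i\<in>{1..r}. poly (a i) \<theta> * (zt(1 := z1)) i) ^ N)
      (tuples q {1..r}) - L) \<le> 1 / absv z1 ^ N"
proof -
  define D where "D = (\<lambda>a::nat \<Rightarrow> 'c poly. \<Sum>i\<in>{1..r}. poly (a i) \<theta> * (zt(1 := z1)) i)"
  define f where "f = (\<lambda>a. poly (a j) t / D a ^ N)"
  define T where "T = {a \<in> tuples q {1..r}. a 1 \<noteq> (0 :: 'c poly)}"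
  have ins: "{1..r} = insert 1 {2..r}"
    using r by auto
  then have split: "tuples q {1..r} = tuples q {2..r} \<union> T" "tuples q {2..r} \<inter> T = {}"
    using tuples_insert[of 1 "{2..r}"] by (simp_all add: T_def)
  have sum_upd: "(\<Sum>i\<in>{2..r}. g i * (zt(1 := z1)) i) = (\<Sum>i\<in>{2..r}. g i * zt i)" for g
    by (intro sum.cong) auto
  have "abs_has_sum absv f (tuples q {2..r}) L"
  proof (rule abs_has_sum_cong[OF L])
    fix a :: "nat \<Rightarrow> 'c poly"
    assume "a \<in> tuples q {2..r}"
    then have "a 1 = 0"
      by (simp add: tuples_def)
    have "D a = poly (a 1) \<theta> * z1 + (\<Sum>i\<in>{2..r}. poly (a i) \<theta> * (zt(1 := z1)) i)"
      using sum_atLeastAtMost_1_split[OF r, of "\<lambda>i. poly (a i) \<theta> * (zt(1 := z1)) i"] by (simp add: D_def)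
    also have "\<dots> = (\<Sum>i\<in>{2..r}. poly (a i) \<theta> * zt i)"
      using \<open>a 1 = 0\<close> sum_upd[of "\<lambda>i. poly (a i) \<theta>"] by simp
    finally show "poly (a j) t / (\<Sum>i\<in>{2..r}. poly (a i) \<theta> * zt i) ^ N = f a"
      by (simp add: f_def)
  qed
  moreover obtain s where s: "abs_has_sum absv f T s"
    using lattice_sum_summable[OF _ indep t _ N, of T j] by (auto simp: T_def f_def D_def)
  ultimately have infsum: "abs_infsum absv f (tuples q {1..r}) = L + s"
    unfolding split by (intro abs_infsum_eqI abs_has_sum_Un_disjoint split(2))
  have "z1 \<noteq> 0"
    using lin_indep_over_insert_not_in_span[OF indep[unfolded ins], of "\<lambda>_. 0"]
      subfield_0[OF is_subfield_Kinf] subfield_1[OF is_subfield_Kinf] by simp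
  have "absv s \<le> 1 / absv z1 ^ N"
  proof (rule abs_has_sum_le[OF s])
    fix a
    assume "a \<in> T"
    then have "absv z1 \<le> absv (D a)"
      using abs_le_abs_lattice_form[OF r _ _ z1] by (simp add: T_def D_def)
    then have "absv z1 ^ N \<le> absv (D a) ^ N"
      by (simp add: power_mono)
    moreover have "absv (poly (a j) t) \<le> 1"
      using \<open>a \<in> T\<close> abs_poly_le_1[OF tuples_in_Apoly t] unfolding T_def by blast
    ultimately show "absv (f a) \<le> 1 / absv z1 ^ N"
      using \<open>z1 \<noteq> 0\<close> by (simp add: f_def frac_le)
  qed simp
  with infsum show ?thesis
    by (simp add: f_def D_def)
qed

theorem lattice_sum_limit:
  assumes r: "1 \<le> r" and indep: "lin_indep_over (Kinf absv q \<theta>) {2..r} zt"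
    and t: "absv t \<le> 1" and N: "N > 0"
  shows "\<exists>L. abs_has_sum absv (\<lambda>a. poly (a j) t / (\<Sum>i\<in>{2..r}. poly (a i) \<theta> * zt i) ^ N)
              (tuples q {2..r}) L
          \<and> (\<forall>z1. lin_indep_over (Kinf absv q \<theta>) {1..r} (zt(1 := z1))
                  \<longrightarrow> (\<exists>s. abs_has_sum absv
                        (\<lambda>a. poly (a j) t / (\<Sum>i\<in>{1..r}. poly (a i) \<theta> * (zt(1 := z1)) i) ^ N)
                        (tuples q {1..r}) s))
          \<and> (\<forall>\<epsilon>>0. \<exists>R. \<forall>z1. lin_indep_over (Kinf absv q \<theta>) {1..r} (zt(1 := z1))
                  \<and> absv z1 = imag_abs absv (Kinf absv q \<theta>) r z1 zt \<and> absv z1 > R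
                  \<longrightarrow> absv (abs_infsum absv
                        (\<lambda>a. poly (a j) t / (\<Sum>i\<in>{1..r}. poly (a i) \<theta> * (zt(1 := z1)) i) ^ N)
                        (tuples q {1..r}) - L) < \<epsilon>)"
proof -
  obtain L where L: "abs_has_sum absv (\<lambda>a. poly (a j) t / (\<Sum>i\<in>{2..r}. poly (a i) \<theta> * zt i) ^ N)
      (tuples q {2..r}) L"
    using lattice_sum_summable[OF _ indep t _ N] by blast
  have near: "absv (abs_infsum absv
      (\<lambda>a. poly (a j) t / (\<Sum>i\<in>{1..r}. poly (a i) \<theta> * (zt(1 := z1)) i) ^ N) (tuples q {1..r}) - L) < \<epsilon>"
    if "\<epsilon> > 0" and indep1: "lin_indep_over (Kinf absv q \<theta>) {1..r} (zt(1 := z1))"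
      and z1: "absv z1 = imag_abs absv (Kinf absv q \<theta>) r z1 zt" "absv z1 > max 1 (1 / \<epsilon>)"
    for \<epsilon> z1
  proof -
    have "absv z1 > 1"
      using z1(2) by simp
    then have "absv z1 \<le> absv z1 ^ N"
      using N by (simp add: self_le_power)
    then have "1 / absv z1 ^ N \<le> 1 / absv z1"
      using \<open>absv z1 > 1\<close> by (intro divide_left_mono) (auto simp: zero_less_mult_iff)
    also have "1 / absv z1 < \<epsilon>"
      using z1(2) \<open>\<epsilon> > 0\<close> by (simp add: divide_less_eq mult.commute less_divide_eq)
    finally show ?thesis
      using lattice_sum_minus_limit_le[OF r indep1 t N z1(1) L] by linarith
  qed
  show ?thesis
    apply (rule exI[of _ L], intro conjI allI impI L)
    subgoal
      by (rule lattice_sum_summable[OF finite_atLeastAtMost _ t order_refl N])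
    subgoal for \<epsilon>
      by (intro exI[of _ "max 1 (1 / \<epsilon>)"] allI impI near) auto
    done
qed

end

lemma Cinf_field_if_Cinf_setup:
  assumes "Cinf_setup q \<theta> absv"
  shows "Cinf_field absv q \<theta>"
proof -
  interpret nonarch_abs absv
    using assms by unfold_locales (auto simp: Cinf_setup_def)
  show ?thesis
    using assms by unfold_locales
      (auto simp: Cinf_setup_def abs_Cauchy_def abs_lim_def eventually_sequentially)
qed

theorem proposition3p9:
  fixes q :: nat and \<theta> :: "'c::field" and absv :: "'c \<Rightarrow> real"
    and r j k :: nat and zt :: "nat \<Rightarrow> 'c" and t :: 'c
  assumes Cinf: "Cinf_setup q \<theta> absv"
    and r: "r \<ge> 2"
    and zt_Omega: "lin_indep_over (Kinf absv q \<theta>) {2..r} zt" "zt r = 1"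
    and j: "2 \<le> j" "j \<le> r"
    and t: "absv t \<le> 1"
  shows "\<exists>L. abs_has_sum absv
              (\<lambda>a. poly (a j) t / (\<Sum>i\<in>{2..r}. poly (a i) \<theta> * zt i) ^ (q ^ k))
              (tuples q {2..r}) L
          \<and> (\<forall>z1. lin_indep_over (Kinf absv q \<theta>) {1..r} (zt(1 := z1))
                  \<longrightarrow> (\<exists>s. abs_has_sum absv
                        (\<lambda>a. poly (a j) t / (\<Sum>i\<in>{1..r}. poly (a i) \<theta> * (zt(1 := z1)) i) ^ (q ^ k))
                        (tuples q {1..r}) s))
          \<and> (\<forall>\<epsilon>>0. \<exists>R. \<forall>z1. lin_indep_over (Kinf absv q \<theta>) {1..r} (zt(1 := z1))
                  \<and> absv z1 = imag_abs absv (Kinf absv q \<theta>) r z1 zt \<and> absv z1 > R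
                  \<longrightarrow> absv (abs_infsum absv
                        (\<lambda>a. poly (a j) t / (\<Sum>i\<in>{1..r}. poly (a i) \<theta> * (zt(1 := z1)) i) ^ (q ^ k))
                        (tuples q {1..r}) - L) < \<epsilon>)"
proof -
  interpret Cinf_field absv q \<theta>
    using Cinf by (rule Cinf_field_if_Cinf_setup)
  show ?thesis
    using r zt_Omega(1) t q_ge_2 by (intro lattice_sum_limit) simp_all
qed

end
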